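(* In any Minkowski space $X$, if $\{\mathbf{o}\mathbf{x}_1,\dots,\mathbf{o}\mathbf{x}_n\}$ is a floating FT configuration, then $\{\mathbf{o}\mathbf{x}_1,\dots,\mathbf{o}\mathbf{x}_{n-1}\}$ is an absorbing FT configuration.
   Context: A Minkowski space is a finite-dimensional real normed space $(X,\|\cdot\|)$. A Fermat-Torricelli (FT) point of finitely many points $\mathbf{y}_1,\dots,\mathbf{y}_m$ is a minimizer of $\mathbf{x}\mapsto\sum_i\|\mathbf{x}-\mathbf{y}_i\|$. A configuration $\{\mathbf{x}_0\mathbf{x}_i: i=1,\dots,n\}$ is a set of segments from $\mathbf{x}_0$ with $\mathbf{x}_i\neq\mathbf{x}_0$; it is a floating FT configuration if $\mathbf{x}_0$ is an FT point of $\{\mathbf{x}_1,\dots,\mathbf{x}_n\}$, and an absorbing FT configuration if $\mathbf{x}_0$ is an FT point of $\{\mathbf{x}_0,\mathbf{x}_1,\dots,\mathbf{x}_n\}$. *)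

theory Defs
  imports "HOL-Analysis.Analysis"
begin

definition minkowski_space :: "'a::real_normed_vector itself \<Rightarrow> bool" where
  "minkowski_space _ \<longleftrightarrow> (\<exists>B::'a set. finite B \<and> span B = UNIV)"

definition FT_point :: "'a::real_normed_vector \<Rightarrow> 'a set \<Rightarrow> bool" where
  "FT_point x0 S \<longleftrightarrow> (\<forall>z. (\<Sum>y\<in>S. norm (x0 - y)) \<le> (\<Sum>y\<in>S. norm (z - y)))"

text \<open>A configuration from x0 is given by the finite set S of the other endpoints
  of its segments (all different from x0).\<close>
definition floating_FT_config :: "'a::real_normed_vector \<Rightarrow> 'a set \<Rightarrow> bool" where
  "floating_FT_config x0 S \<longleftrightarrow> finite S \<and> x0 \<notin> S \<and> FT_point x0 S"

definition absorbing_FT_config :: "'a::real_normed_vector \<Rightarrow> 'a set \<Rightarrow> bool" where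
  "absorbing_FT_config x0 S \<longleftrightarrow> finite S \<and> x0 \<notin> S \<and> FT_point x0 (insert x0 S)"

end

theory Submission
  imports Defs
begin

text \<open>Replacing one point p of the data by x0 itself changes the cost of x0 by
  -norm (x0 - p) and the cost of any competitor z by norm (z - x0) - norm (z - p),
  which by the triangle inequality is at least -norm (x0 - p). So x0 stays optimal.\<close>

lemma FT_point_absorb:
  fixes x0 p :: "'a::real_normed_vector"
  assumes "finite T" and "p \<notin> T" and "x0 \<notin> T"
    and "FT_point x0 (insert p T)"
  shows "FT_point x0 (insert x0 T)"
  unfolding FT_point_def
proof
  fix z
  have opt: "(\<Sum>y\<in>T. norm (x0 - y)) + norm (x0 - p) \<le> (\<Sum>y\<in>T. norm (z - y)) + norm (z - p)"
    using assms(4)[unfolded FT_point_def, rule_format, of z] assms(1,2) by (simp add: add.commute)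
  have "norm (z - p) \<le> norm (z - x0) + norm (x0 - p)"
    using norm_triangle_ineq[of "z - x0" "x0 - p"] by simp
  with opt show "(\<Sum>y\<in>insert x0 T. norm (x0 - y)) \<le> (\<Sum>y\<in>insert x0 T. norm (z - y))"
    using assms(1,3) by simp
qed

lemma inj_on_image_atLeastAtMost_last:
  fixes n :: nat
  assumes "n \<ge> 1" and "inj_on x {1..n}"
  shows "x ` {1..n} = insert (x n) (x ` {1..n-1})" and "x n \<notin> x ` {1..n-1}"
proof -
  have "{1..n} = insert n {1..n-1}" using assms(1) by auto
  then show "x ` {1..n} = insert (x n) (x ` {1..n-1})" by simp
  show "x n \<notin> x ` {1..n-1}"
    using inj_on_image_mem_iff[OF assms(2), of n "{1..n-1}"] assms(1) by auto
qed

theorem corollary3p7: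
  fixes x0 :: "'a::real_normed_vector" and x :: "nat \<Rightarrow> 'a" and n :: nat
  assumes "minkowski_space TYPE('a)"
    and "n \<ge> 1"
    and "inj_on x {1..n}"
    and "floating_FT_config x0 (x ` {1..n})"
  shows "absorbing_FT_config x0 (x ` {1..n-1})"
proof -
  note last = inj_on_image_atLeastAtMost_last[OF assms(2,3)]
  have "x0 \<notin> x ` {1..n-1}" and "FT_point x0 (insert (x n) (x ` {1..n-1}))"
    using assms(4) last(1) unfolding floating_FT_config_def by auto
  with last(2) have "FT_point x0 (insert x0 (x ` {1..n-1}))"
    by (intro FT_point_absorb) auto
  with \<open>x0 \<notin> x ` {1..n-1}\<close> show ?thesis
    unfolding absorbing_FT_config_def by simp
qed

end
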